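(* For all $\rho^{0},\rho^{1},\theta^{0},\theta^{1}>0$, \[ s(\rho^1,\theta^1)-s(\rho^0,\theta^0)\;\ge\;\frac{1}{\theta^1}\big(e(\rho^1,\theta^1)-e(\rho^0,\theta^0)\big)-\frac{1}{\rho^0\,\theta^1}\,\frac{p(\rho^1,\theta^1)}{\rho^1}\,\big(\rho^1-\rho^0\big). \]
   Context: Subscripts denote partial derivatives. Let $P\in C^3((0,\infty)^2)$, $P=P(\rho,\theta)$, and $Q\in C^2((0,\infty))$, $Q=Q(\theta)$, satisfy for all $\rho,\theta>0$: $P_\rho\ge0$, $(\rho P_\rho)_\rho\ge0$, $Q_\theta-\theta P_{\theta\theta}\ge\underline c_v$ for some constant $\underline c_v>0$. Define the pressure $p=\rho^2P_\rho$, the specific internal energy $e=P-\theta P_\theta+Q$, and the specific entropy $s(\rho,\theta)=\int_1^\theta\frac{Q_\theta(t)}{t}dt-P_\theta(\rho,\theta)$. *)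

theory Defs
  imports "HOL-Analysis.Analysis"
begin

definition pdr :: "(real \<Rightarrow> real \<Rightarrow> real) \<Rightarrow> real \<Rightarrow> real \<Rightarrow> real" where
  "pdr f = (\<lambda>r t. deriv (\<lambda>x. f x t) r)"
definition pdt :: "(real \<Rightarrow> real \<Rightarrow> real) \<Rightarrow> real \<Rightarrow> real \<Rightarrow> real" where
  "pdt f = (\<lambda>r t. deriv (\<lambda>y. f r y) t)"

definition quad :: "(real \<times> real) set" where
  "quad = {0<..} \<times> {0<..}"

definition C1q :: "(real \<Rightarrow> real \<Rightarrow> real) \<Rightarrow> bool" where
  "C1q f \<longleftrightarrow> continuous_on quad (\<lambda>z. f (fst z) (snd z)) \<and>
     (\<forall>r>0. \<forall>t>0. (\<lambda>x. f x t) differentiable (at r) \<and> (\<lambda>y. f r y) differentiable (at t))"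

fun Ckq :: "nat \<Rightarrow> (real \<Rightarrow> real \<Rightarrow> real) \<Rightarrow> bool" where
  "Ckq 0 f \<longleftrightarrow> continuous_on quad (\<lambda>z. f (fst z) (snd z))"
| "Ckq (Suc k) f \<longleftrightarrow> C1q f \<and> Ckq k (pdr f) \<and> Ckq k (pdt f)"

definition C2pos :: "(real \<Rightarrow> real) \<Rightarrow> bool" where
  "C2pos Q \<longleftrightarrow> (\<forall>t>0. Q differentiable (at t) \<and> deriv Q differentiable (at t))
     \<and> continuous_on {0<..} (deriv (deriv Q))"

definition pres :: "(real \<Rightarrow> real \<Rightarrow> real) \<Rightarrow> real \<Rightarrow> real \<Rightarrow> real" where
  "pres P r t = r^2 * pdr P r t"

definition energy :: "(real \<Rightarrow> real \<Rightarrow> real) \<Rightarrow> (real \<Rightarrow> real) \<Rightarrow> real \<Rightarrow> real \<Rightarrow> real" where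
  "energy P Q r t = P r t - t * pdt P r t + Q t"

text \<open>s(rho,theta) = int_1^theta Q'(tau)/tau dtau - P_theta(rho,theta), with the oriented
  integral (interval_lebesgue_integral handles theta < 1 with a sign).\<close>
definition entropy :: "(real \<Rightarrow> real \<Rightarrow> real) \<Rightarrow> (real \<Rightarrow> real) \<Rightarrow> real \<Rightarrow> real \<Rightarrow> real" where
  "entropy P Q r t = (LBINT \<tau>=1..t. deriv Q \<tau> / \<tau>) - pdt P r t"

end

theory Submission
  imports Defs
begin

text \<open>Fix the final temperature \<open>T = \<theta>\<^sup>1\<close> and consider the availability \<open>e - T s\<close>.
  Its \<open>\<theta>\<close>-derivative at fixed \<open>\<rho>\<close> is \<open>(\<theta> - T)/\<theta> \<cdot> (Q\<^sub>\<theta> - \<theta> P\<^sub>\<theta>\<^sub>\<theta>)\<close>, and the second factor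
  is at least \<open>c\<^sub>v > 0\<close>, so at fixed density the availability is smallest at \<open>\<theta> = T\<close>.
  At \<open>\<theta> = T\<close> it depends on \<open>\<rho>\<close> only through \<open>P\<close>, and the increment of \<open>P\<close> in \<open>\<rho>\<close> is
  controlled by the mean value theorem, since \<open>\<rho> P\<^sub>\<rho>\<close> is nonnegative and nondecreasing.\<close>

definition availability ::
    "(real \<Rightarrow> real \<Rightarrow> real) \<Rightarrow> (real \<Rightarrow> real) \<Rightarrow> real \<Rightarrow> real \<Rightarrow> real \<Rightarrow> real" where
  "availability P Q T r t = energy P Q r t - T * entropy P Q r t"

lemma C1q_has_pdr:
  assumes "C1q f" "0 < r" "0 < t"
  shows "((\<lambda>x. f x t) has_real_derivative pdr f r t) (at r)"
  using assms unfolding C1q_def pdr_def by (simp add: DERIV_deriv_iff_real_differentiable)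

lemma C1q_has_pdt:
  assumes "C1q f" "0 < r" "0 < t"
  shows "((\<lambda>y. f r y) has_real_derivative pdt f r t) (at t)"
  using assms unfolding C1q_def pdt_def by (simp add: DERIV_deriv_iff_real_differentiable)

lemma C2pos_has_deriv:
  assumes "C2pos Q" "0 < t"
  shows "(Q has_real_derivative deriv Q t) (at t)"
  using assms unfolding C2pos_def by (simp add: DERIV_deriv_iff_real_differentiable)

lemma C2pos_continuous_on_deriv:
  assumes "C2pos Q"
  shows "continuous_on {0<..} (deriv Q)"
  using assms unfolding C2pos_def
  by (intro continuous_at_imp_continuous_on) (auto intro: differentiable_imp_continuous_within)

lemma has_real_derivative_interval_integral:
  fixes g :: "real \<Rightarrow> real" and c :: real
  assumes cont: "continuous_on {0<..} g" and "0 < c" "0 < x"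
  shows "((\<lambda>u. LBINT y=c..u. g y) has_real_derivative g x) (at x)"
proof -
  define a where "a = min c x / 2"
  define b where "b = max c x + 1"
  have ab: "0 < a" "a \<le> c" "c \<le> b" "a < x" "x < b"
    using assms(2,3) by (auto simp: a_def b_def)
  have "continuous_on {a..b} g"
    using ab by (intro continuous_on_subset[OF cont]) auto
  then have "((\<lambda>u. LBINT y=c..u. g y) has_vector_derivative g x) (at x within {a<..<b})"
    using ab by (intro has_vector_derivative_within_subset[OF interval_integral_FTC2]) auto
  then have "((\<lambda>u. LBINT y=c..u. g y) has_vector_derivative g x) (at x)"
    using ab by (subst (asm) has_vector_derivative_within_open) auto
  then show ?thesis
    by (simp add: has_real_derivative_iff_has_vector_derivative)
qed

lemma has_real_derivative_availability:
  assumes "((\<lambda>y. P r y) has_real_derivative pdt P r t) (at t)"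
    and "((\<lambda>y. pdt P r y) has_real_derivative pdt (pdt P) r t) (at t)"
    and "(Q has_real_derivative deriv Q t) (at t)"
    and "((\<lambda>u. LBINT \<tau>=1..u. deriv Q \<tau> / \<tau>) has_real_derivative deriv Q t / t) (at t)"
    and "0 < t"
  shows "((\<lambda>u. availability P Q T r u) has_real_derivative
           (t - T) / t * (deriv Q t - t * pdt (pdt P) r t)) (at t)"
proof -
  have "((\<lambda>u. u * pdt P r u) has_real_derivative pdt P r t + t * pdt (pdt P) r t) (at t)"
    using DERIV_mult[OF DERIV_ident assms(2)] by (simp add: mult.commute)
  then have "((\<lambda>u. availability P Q T r u) has_real_derivative
          pdt P r t - (pdt P r t + t * pdt (pdt P) r t) + deriv Q t
          - T * (deriv Q t / t - pdt (pdt P) r t)) (at t)"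
    unfolding availability_def energy_def entropy_def
    by (intro DERIV_diff DERIV_add DERIV_cmult assms)
  moreover have "pdt P r t - (pdt P r t + t * pdt (pdt P) r t) + deriv Q t
      - T * (deriv Q t / t - pdt (pdt P) r t) = (t - T) / t * (deriv Q t - t * pdt (pdt P) r t)"
    using \<open>0 < t\<close> by (simp add: field_simps)
  ultimately show ?thesis by simp
qed

lemma min_at_derivative_sign_change:
  fixes f f' :: "real \<Rightarrow> real"
  assumes deriv: "\<And>t. a < t \<Longrightarrow> (f has_real_derivative f' t) (at t)"
    and nonpos: "\<And>t. a < t \<Longrightarrow> t \<le> m \<Longrightarrow> f' t \<le> 0"
    and nonneg: "\<And>t. a < t \<Longrightarrow> m \<le> t \<Longrightarrow> 0 \<le> f' t"
    and "a < m" "a < x"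
  shows "f m \<le> f x"
proof (cases "x \<le> m")
  case True
  show ?thesis
  proof (rule DERIV_nonpos_imp_nonincreasing[of x m f, OF True])
    fix t assume "x \<le> t" "t \<le> m"
    then have "a < t" using \<open>a < x\<close> by linarith
    then show "\<exists>y. (f has_real_derivative y) (at t) \<and> y \<le> 0"
      using deriv nonpos \<open>t \<le> m\<close> by blast
  qed
next
  case False
  show ?thesis
  proof (rule DERIV_nonneg_imp_nondecreasing[of m x f])
    show "m \<le> x" using False by linarith
  next
    fix t assume "m \<le> t" "t \<le> x"
    then have "a < t" using \<open>a < m\<close> by linarith
    then show "\<exists>y. (f has_real_derivative y) (at t) \<and> 0 \<le> y"
      using deriv nonneg \<open>m \<le> t\<close> by blast
  qed
qed

lemma availability_min_at_ambient:
  assumes "C1q P" "C1q (pdt P)" "C2pos Q"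
    and heat_capacity: "\<And>t. 0 < t \<Longrightarrow> 0 \<le> deriv Q t - t * pdt (pdt P) r t"
    and "0 < r" "0 < T" "0 < t"
  shows "availability P Q T r T \<le> availability P Q T r t"
proof (rule min_at_derivative_sign_change[where a = 0 and f = "availability P Q T r"
      and f' = "\<lambda>u. (u - T) / u * (deriv Q u - u * pdt (pdt P) r u)"])
  have "continuous_on {0<..} (\<lambda>\<tau>. deriv Q \<tau> / \<tau>)"
    using C2pos_continuous_on_deriv[OF \<open>C2pos Q\<close>] by (intro continuous_intros) auto
  then show "(availability P Q T r has_real_derivative
      (u - T) / u * (deriv Q u - u * pdt (pdt P) r u)) (at u)" if "0 < u" for u
    using assms that
    by (intro has_real_derivative_availability C1q_has_pdt C2pos_has_deriv
          has_real_derivative_interval_integral[of _ 1, unfolded one_ereal_def[symmetric]]) auto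
  show "(u - T) / u * (deriv Q u - u * pdt (pdt P) r u) \<le> 0" if "0 < u" "u \<le> T" for u
    using heat_capacity[OF \<open>0 < u\<close>] that by (simp add: divide_nonpos_pos mult_nonpos_nonneg)
  show "0 \<le> (u - T) / u * (deriv Q u - u * pdt (pdt P) r u)" if "0 < u" "T \<le> u" for u
    using heat_capacity[OF \<open>0 < u\<close>] that by simp
qed (use assms in auto)

lemma availability_ambient_diff:
  "availability P Q t r1 t - availability P Q t r0 t = P r1 t - P r0 t"
  unfolding availability_def energy_def entropy_def by (simp add: algebra_simps)

lemma increment_le_of_mult_deriv_mono:
  fixes f f' :: "real \<Rightarrow> real"
  assumes deriv: "\<And>x. 0 < x \<Longrightarrow> (f has_real_derivative f' x) (at x)"
    and mono: "\<And>x y. 0 < x \<Longrightarrow> x \<le> y \<Longrightarrow> x * f' x \<le> y * f' y"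
    and nonneg: "\<And>x. 0 < x \<Longrightarrow> 0 \<le> f' x"
    and r0: "0 < r0" and r1: "0 < r1"
  shows "f r1 - f r0 \<le> r1 * f' r1 / r0 * (r1 - r0)"
proof (cases r0 r1 rule: linorder_cases)
  case less
  obtain z where z: "r0 < z" "z < r1" "f r1 - f r0 = (r1 - r0) * f' z"
    using MVT2[OF less, of f f'] deriv r0 by force
  have "f' z = z * f' z / z" using z r0 by simp
  also have "\<dots> \<le> r1 * f' r1 / z" using mono[of z r1] z r0 by (intro divide_right_mono) auto
  also have "\<dots> \<le> r1 * f' r1 / r0" using nonneg[OF r1] r1 r0 z by (intro divide_left_mono) auto
  finally have "(r1 - r0) * f' z \<le> (r1 - r0) * (r1 * f' r1 / r0)"
    using less by (intro mult_left_mono) auto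
  then show ?thesis using z by (simp add: algebra_simps)
next
  case equal
  then show ?thesis by simp
next
  case greater
  obtain z where z: "r1 < z" "z < r0" "f r0 - f r1 = (r0 - r1) * f' z"
    using MVT2[OF greater, of f f'] deriv r1 by force
  have "r1 * f' r1 / r0 \<le> z * f' z / r0" using mono[of r1 z] z r1 r0 by (intro divide_right_mono) auto
  also have "\<dots> \<le> z * f' z / z" using nonneg[of z] r1 z by (intro divide_left_mono) auto
  also have "\<dots> = f' z" using z r1 by simp
  finally have "(r0 - r1) * (r1 * f' r1 / r0) \<le> (r0 - r1) * f' z"
    using greater by (intro mult_left_mono) auto
  then have "f r1 - f r0 \<le> - ((r0 - r1) * (r1 * f' r1 / r0))"
    using z by simp
  also have "\<dots> = r1 * f' r1 / r0 * (r1 - r0)"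
    using r0 by (simp add: field_simps)
  finally show ?thesis .
qed

lemma mult_pdr_mono:
  assumes "C1q (pdr P)"
    and nonneg: "\<And>r. 0 < r \<Longrightarrow> 0 \<le> pdr (\<lambda>x y. x * pdr P x y) r t"
    and "0 < t" "0 < a" "a \<le> b"
  shows "a * pdr P a t \<le> b * pdr P b t"
proof (rule DERIV_nonneg_imp_nondecreasing[OF \<open>a \<le> b\<close>])
  fix x assume "a \<le> x"
  then have "0 < x" using \<open>0 < a\<close> by simp
  have "(\<lambda>x. x * pdr P x t) differentiable (at x)"
    using \<open>C1q (pdr P)\<close> \<open>0 < x\<close> \<open>0 < t\<close> unfolding C1q_def by auto
  then show "\<exists>y. ((\<lambda>x. x * pdr P x t) has_real_derivative y) (at x) \<and> 0 \<le> y"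
    using nonneg[OF \<open>0 < x\<close>] unfolding pdr_def[of "\<lambda>x y. x * pdr P x y"]
    by (intro exI[of _ "deriv (\<lambda>x. x * pdr P x t) x"]) (simp add: DERIV_deriv_iff_real_differentiable)
qed

theorem mainTheorem8:
  fixes P :: "real \<Rightarrow> real \<Rightarrow> real" and Q :: "real \<Rightarrow> real" and cv :: real
  assumes hP: "Ckq 3 P"
    and hQ: "C2pos Q"
    and hcv: "cv > 0"
    and h1: "\<And>r t. r > 0 \<Longrightarrow> t > 0 \<Longrightarrow> pdr P r t \<ge> 0"
    and h2: "\<And>r t. r > 0 \<Longrightarrow> t > 0 \<Longrightarrow> pdr (\<lambda>x y. x * pdr P x y) r t \<ge> 0"
    and h3: "\<And>r t. r > 0 \<Longrightarrow> t > 0 \<Longrightarrow> deriv Q t - t * pdt (pdt P) r t \<ge> cv"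
    and r0: "r0 > 0" and r1: "r1 > 0" and t0: "t0 > 0" and t1: "t1 > 0"
  shows "entropy P Q r1 t1 - entropy P Q r0 t0 \<ge>
           (1 / t1) * (energy P Q r1 t1 - energy P Q r0 t0)
           - (1 / (r0 * t1)) * (pres P r1 t1 / r1) * (r1 - r0)"
proof -
  have C1: "C1q P" "C1q (pdr P)" "C1q (pdt P)"
    using hP by (simp_all add: eval_nat_numeral)
  have "0 \<le> deriv Q t - t * pdt (pdt P) r0 t" if "0 < t" for t
    using h3[OF r0 that] hcv by linarith
  then have "availability P Q t1 r0 t1 \<le> availability P Q t1 r0 t0"
    by (intro availability_min_at_ambient C1 hQ r0 t0 t1)
  moreover have "P r1 t1 - P r0 t1 \<le> r1 * pdr P r1 t1 / r0 * (r1 - r0)"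
    using mult_pdr_mono[OF C1(2) h2[OF _ t1] t1] h1[OF _ t1] C1q_has_pdr[OF C1(1) _ t1]
    by (intro increment_le_of_mult_deriv_mono r0 r1) auto
  moreover have "r1 * pdr P r1 t1 / r0 * (r1 - r0) = pres P r1 t1 / r1 / r0 * (r1 - r0)"
    using r1 by (simp add: pres_def power2_eq_square)
  ultimately have bound: "energy P Q r1 t1 - energy P Q r0 t0 - t1 * (entropy P Q r1 t1 - entropy P Q r0 t0)
      \<le> pres P r1 t1 / r1 / r0 * (r1 - r0)"
    using availability_ambient_diff[of P Q t1 r1 r0] unfolding availability_def
    by (simp add: algebra_simps)
  have rearrange: "\<And>E S p. E - t1 * S \<le> p / r1 / r0 * (r1 - r0) \<Longrightarrow>
      1 / t1 * E - 1 / (r0 * t1) * (p / r1) * (r1 - r0) \<le> S"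
    using t1 r0 r1 by (simp add: field_simps)
  show ?thesis by (rule rearrange[OF bound])
qed

end
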